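(* Let $C$ be the split octonion algebra over $k$, $G_C=\mathrm{Aut}(C)$, $V_C=1_C^\perp$, and let $G_C\times GL_1$ act on $V_C$ by $(\phi,a)\cdot v=a\,\phi(v)$. Let $V_C^{ss}(k)=\{v\in V_C(k):N_C(v)\neq0\}$. Then $v\mapsto N_C(v)k^{\times2}$ induces a bijection $V_C^{ss}(k)/(G_C\times GL_1)(k)\to k^\times/k^{\times2}$; hence these orbits are in bijection with the isomorphism classes of $2$-dimensional composition algebras over $k$.
   Context: $k$ is a field with $\mathrm{char}(k)\neq2$. An octonion algebra is an 8-dimensional unital $k$-algebra with non-degenerate multiplicative quadratic norm $N_C$; it is split if $N_C$ is isotropic (unique up to isomorphism). $1_C^\perp$ is the orthogonal complement of the identity with respect to the bilinear form of $N_C$. *)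

theory Defs
  imports Main
begin

datatype 'k mat2 = M2 'k 'k 'k 'k  (* M2 a b c d = matrix [[a,b],[c,d]] *)

fun m2_add :: "'k::field mat2 \<Rightarrow> 'k mat2 \<Rightarrow> 'k mat2" where
  "m2_add (M2 a b c d) (M2 a' b' c' d') = M2 (a+a') (b+b') (c+c') (d+d')"

fun m2_smult :: "'k::field \<Rightarrow> 'k mat2 \<Rightarrow> 'k mat2" where
  "m2_smult s (M2 a b c d) = M2 (s*a) (s*b) (s*c) (s*d)"

fun m2_mult :: "'k::field mat2 \<Rightarrow> 'k mat2 \<Rightarrow> 'k mat2" where
  "m2_mult (M2 a b c d) (M2 a' b' c' d') =
     M2 (a*a' + b*c') (a*b' + b*d') (c*a' + d*c') (c*b' + d*d')"

definition m2_one :: "'k::field mat2" where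
  "m2_one = M2 1 0 0 1"

definition m2_zero :: "'k::field mat2" where
  "m2_zero = M2 0 0 0 0"

fun m2_conj :: "'k::field mat2 \<Rightarrow> 'k mat2" where
  "m2_conj (M2 a b c d) = M2 d (-b) (-c) a"

fun m2_det :: "'k::field mat2 \<Rightarrow> 'k" where
  "m2_det (M2 a b c d) = a*d - b*c"

text \<open>Following Springer--Veldkamp: C = M_2(k) x M_2(k) with
  (a,b)(c,d) = (ac + conj(d) b, d a + b conj(c)) and N(a,b) = det a - det b.
  Its norm is isotropic, so this is (a model of) the split octonion algebra,
  which is unique up to isomorphism.\<close>

type_synonym 'k oct = "'k mat2 \<times> 'k mat2"

definition oct_add :: "'k::field oct \<Rightarrow> 'k oct \<Rightarrow> 'k oct" where
  "oct_add x y = (m2_add (fst x) (fst y), m2_add (snd x) (snd y))"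

definition oct_smult :: "'k::field \<Rightarrow> 'k oct \<Rightarrow> 'k oct" where
  "oct_smult s x = (m2_smult s (fst x), m2_smult s (snd x))"

definition oct_mult :: "'k::field oct \<Rightarrow> 'k oct \<Rightarrow> 'k oct" where
  "oct_mult x y =
     (m2_add (m2_mult (fst x) (fst y)) (m2_mult (m2_conj (snd y)) (snd x)),
      m2_add (m2_mult (snd y) (fst x)) (m2_mult (snd x) (m2_conj (fst y))))"

definition oct_one :: "'k::field oct" where
  "oct_one = (m2_one, m2_zero)"

definition oct_norm :: "'k::field oct \<Rightarrow> 'k" where
  "oct_norm x = m2_det (fst x) - m2_det (snd x)"

text \<open>Polar bilinear form of the norm (only orthogonality is used, so the
  normalisation factor is irrelevant).\<close>
definition oct_bil :: "'k::field oct \<Rightarrow> 'k oct \<Rightarrow> 'k" where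
  "oct_bil x y = oct_norm (oct_add x y) - oct_norm x - oct_norm y"

definition oct_aut :: "('k::field oct \<Rightarrow> 'k oct) set" where
  "oct_aut = {\<phi>. bij \<phi>
     \<and> (\<forall>x y. \<phi> (oct_add x y) = oct_add (\<phi> x) (\<phi> y))
     \<and> (\<forall>s x. \<phi> (oct_smult s x) = oct_smult s (\<phi> x))
     \<and> (\<forall>x y. \<phi> (oct_mult x y) = oct_mult (\<phi> x) (\<phi> y))
     \<and> \<phi> oct_one = oct_one}"

definition oct_V :: "'k::field oct set" where
  "oct_V = {v. oct_bil oct_one v = 0}"

definition oct_Vss :: "'k::field oct set" where
  "oct_Vss = {v \<in> oct_V. oct_norm v \<noteq> 0}"

definition oct_orbit_rel :: "('k::field oct \<times> 'k oct) set" where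
  "oct_orbit_rel = {(v, w). v \<in> oct_Vss \<and> w \<in> oct_Vss \<and>
     (\<exists>\<phi> \<in> oct_aut. \<exists>a::'k. a \<noteq> 0 \<and> w = oct_smult a (\<phi> v))}"

definition sq_class_eq :: "'k::field \<Rightarrow> 'k \<Rightarrow> bool" where
  "sq_class_eq s t \<longleftrightarrow> (\<exists>c. c \<noteq> 0 \<and> t = c^2 * s)"

text \<open>Every 2-dimensional k-algebra is isomorphic to one with underlying space
  k x k, so isomorphism classes of 2-dimensional composition algebras are
  represented by pairs (multiplication, norm) on k x k.\<close>

definition v2_add :: "'k::field \<times> 'k \<Rightarrow> 'k \<times> 'k \<Rightarrow> 'k \<times> 'k" where
  "v2_add x y = (fst x + fst y, snd x + snd y)"

definition v2_smult :: "'k::field \<Rightarrow> 'k \<times> 'k \<Rightarrow> 'k \<times> 'k" where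
  "v2_smult s x = (s * fst x, s * snd x)"

definition v2_linear :: "('k::field \<times> 'k \<Rightarrow> 'k \<times> 'k) \<Rightarrow> bool" where
  "v2_linear f \<longleftrightarrow> (\<forall>x y. f (v2_add x y) = v2_add (f x) (f y))
                   \<and> (\<forall>s x. f (v2_smult s x) = v2_smult s (f x))"

definition comp_alg2 ::
  "(('k::field \<times> 'k \<Rightarrow> 'k \<times> 'k \<Rightarrow> 'k \<times> 'k) \<times> ('k \<times> 'k \<Rightarrow> 'k)) set" where
  "comp_alg2 = {(m, N).
     \<comment> \<open>m is k-bilinear\<close>
     (\<forall>x y z. m (v2_add x y) z = v2_add (m x z) (m y z))
     \<and> (\<forall>x y z. m x (v2_add y z) = v2_add (m x y) (m x z))
     \<and> (\<forall>s x y. m (v2_smult s x) y = v2_smult s (m x y))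
     \<and> (\<forall>s x y. m x (v2_smult s y) = v2_smult s (m x y))
     \<comment> \<open>m has an identity element\<close>
     \<and> (\<exists>e. \<forall>x. m e x = x \<and> m x e = x)
     \<comment> \<open>N is a quadratic form with bilinear polar form\<close>
     \<and> (\<forall>s x. N (v2_smult s x) = s^2 * N x)
     \<and> (\<forall>x y z. N (v2_add (v2_add x y) z) - N (v2_add x y) - N z
                = (N (v2_add x z) - N x - N z) + (N (v2_add y z) - N y - N z))
     \<comment> \<open>N is non-degenerate\<close>
     \<and> (\<forall>x. (\<forall>y. N (v2_add x y) - N x - N y = 0) \<longrightarrow> x = (0, 0))
     \<comment> \<open>N is multiplicative\<close>
     \<and> (\<forall>x y. N (m x y) = N x * N y)}"

definition comp_alg2_iso ::
  "((('k::field \<times> 'k \<Rightarrow> 'k \<times> 'k \<Rightarrow> 'k \<times> 'k) \<times> ('k \<times> 'k \<Rightarrow> 'k)) \<times>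
    (('k \<times> 'k \<Rightarrow> 'k \<times> 'k \<Rightarrow> 'k \<times> 'k) \<times> ('k \<times> 'k \<Rightarrow> 'k))) set" where
  "comp_alg2_iso = {((m, N), (m', N')). (m, N) \<in> comp_alg2 \<and> (m', N') \<in> comp_alg2 \<and>
     (\<exists>f. bij f \<and> v2_linear f \<and> (\<forall>x y. f (m x y) = m' (f x) (f y))
          \<and> (\<forall>x. N' (f x) = N x))}"

end

theory Submission
  imports Defs
begin

(* Automorphisms fix 1, hence preserve V = 1^perp, and since a traceless v satisfies
   v^2 = -N(v) 1 they also preserve the norm; scaling by a multiplies it by a^2.  Conversely,
   in the model C = M_2(k) + M_2(k) the sandwiches (a, b) |-> (p a p^-1, q b p^-1) with
   det p = det q, together with one explicit involutive automorphism, carry every v in V with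
   N(v) = n <> 0 to the standard element (0, [0 1; n 0]).  So the orbits are classified by N(v)
   modulo squares.  On the other side, a two-dimensional composition algebra has a basis 1, j
   with j^2 = d and trace j = 0 (the trace must vanish because the norm is nondegenerate), which
   identifies it with k[X]/(X^2 - d); and k[X]/(X^2 - s) is isomorphic to k[X]/(X^2 - t) iff
   s and t differ by a square factor. *)

lemma four_neq_zero: "(2::'k::field) \<noteq> 0 \<Longrightarrow> (4::'k) \<noteq> 0"
  by (metis mult_2_right numeral_Bit0 mult_eq_0_iff)

section \<open>The matrix algebra M_2(k)\<close>

lemma m2_mult_assoc: "m2_mult (m2_mult A B) C = m2_mult A (m2_mult B C)"
  by (cases A; cases B; cases C) (simp add: algebra_simps)

lemma m2_mult_add_left: "m2_mult (m2_add A B) C = m2_add (m2_mult A C) (m2_mult B C)"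
  by (cases A; cases B; cases C) (simp add: algebra_simps)

lemma m2_mult_add_right: "m2_mult C (m2_add A B) = m2_add (m2_mult C A) (m2_mult C B)"
  by (cases A; cases B; cases C) (simp add: algebra_simps)

lemma m2_mult_smult_left: "m2_mult (m2_smult s A) B = m2_smult s (m2_mult A B)"
  by (cases A; cases B) (simp add: algebra_simps)

lemma m2_mult_smult_right: "m2_mult A (m2_smult s B) = m2_smult s (m2_mult A B)"
  by (cases A; cases B) (simp add: algebra_simps)

lemma m2_smult_smult: "m2_smult s (m2_smult t A) = m2_smult (s * t) A"
  by (cases A) (simp add: algebra_simps)

lemma m2_smult_add: "m2_smult s (m2_add A B) = m2_add (m2_smult s A) (m2_smult s B)"
  by (cases A; cases B) (simp add: algebra_simps)

lemma m2_smult_one [simp]: "m2_smult 1 A = A"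
  by (cases A) simp

lemma m2_smult_cancel: "s \<noteq> 0 \<Longrightarrow> m2_smult s A = m2_smult s B \<Longrightarrow> A = B"
  by (cases A; cases B) simp

lemma m2_one_mult [simp]: "m2_mult m2_one A = A"
  by (cases A) (simp add: m2_one_def)

lemma m2_mult_one [simp]: "m2_mult A m2_one = A"
  by (cases A) (simp add: m2_one_def)

lemma m2_zero_simps [simp]:
  "m2_mult m2_zero A = m2_zero" "m2_mult A m2_zero = m2_zero" "m2_smult s m2_zero = m2_zero"
  by (cases A; simp add: m2_zero_def)+

lemma m2_conj_mult: "m2_conj (m2_mult A B) = m2_mult (m2_conj B) (m2_conj A)"
  by (cases A; cases B) (simp add: algebra_simps)

lemma m2_conj_smult: "m2_conj (m2_smult s A) = m2_smult s (m2_conj A)"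
  by (cases A) simp

lemma m2_conj_add: "m2_conj (m2_add A B) = m2_add (m2_conj A) (m2_conj B)"
  by (cases A; cases B) (simp add: algebra_simps)

lemma m2_conj_conj [simp]: "m2_conj (m2_conj A) = A"
  by (cases A) simp

lemma m2_conj_one [simp]: "m2_conj m2_one = m2_one"
  by (simp add: m2_one_def)

lemma m2_conj_mult_self: "m2_mult (m2_conj A) A = m2_smult (m2_det A) m2_one"
  by (cases A) (simp add: algebra_simps m2_one_def)

lemma m2_mult_conj_self: "m2_mult A (m2_conj A) = m2_smult (m2_det A) m2_one"
  by (cases A) (simp add: algebra_simps m2_one_def)

lemma m2_conj_mult_cancel: "m2_mult (m2_conj A) (m2_mult A B) = m2_smult (m2_det A) B"
  by (cases A; cases B) (simp add: algebra_simps)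

lemma m2_mult_conj_cancel: "m2_mult A (m2_mult (m2_conj A) B) = m2_smult (m2_det A) B"
  by (cases A; cases B) (simp add: algebra_simps)

lemmas m2_algebra_simps = m2_mult_assoc m2_mult_add_left m2_mult_add_right
  m2_mult_smult_left m2_mult_smult_right m2_smult_smult m2_smult_add
  m2_conj_mult m2_conj_smult m2_conj_add m2_conj_mult_cancel m2_mult_conj_cancel

lemma m2_det_mult: "m2_det (m2_mult A B) = m2_det A * m2_det B"
  by (cases A; cases B) (simp add: algebra_simps)

lemma m2_det_smult: "m2_det (m2_smult s A) = s\<^sup>2 * m2_det A"
  by (cases A) (simp add: algebra_simps power2_eq_square)

lemma m2_det_conj [simp]: "m2_det (m2_conj A) = m2_det A"
  by (cases A) (simp add: algebra_simps)

lemma m2_det_one [simp]: "m2_det m2_one = 1"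
  by (simp add: m2_one_def)

lemma m2_det_zero [simp]: "m2_det m2_zero = 0"
  by (simp add: m2_zero_def)

fun m2_trace :: "'k::field mat2 \<Rightarrow> 'k" where
  "m2_trace (M2 a b c d) = a + d"

text \<open>\<open>M2 0 1 (- det a) 0\<close> is the companion matrix of \<open>X\<^sup>2 + det a\<close>, the characteristic
  polynomial of a traceless \<open>a\<close>.\<close>
lemma m2_similar_companion:
  fixes a :: "'k::field mat2"
  assumes "m2_trace a = 0" and "a \<noteq> m2_zero" and "(2::'k) \<noteq> 0"
  obtains p where "m2_det p \<noteq> 0" "m2_mult p a = m2_mult (M2 0 1 (- m2_det a) 0) p"
proof -
  obtain a1 a2 a3 a4 where "a = M2 a1 a2 a3 a4" by (cases a)
  with assms(1) have a: "a = M2 a1 a2 a3 (- a1)" by (simp add: add_eq_0_iff)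
  consider "a2 \<noteq> 0" | "a2 = 0" "a3 \<noteq> 0" | "a2 = 0" "a3 = 0" "a1 \<noteq> 0"
    using assms(2) a by (auto simp: m2_zero_def)
  then show ?thesis
  proof cases
    case 1
    then show ?thesis by (intro that[of "M2 1 0 a1 a2"]) (simp_all add: a algebra_simps)
  next
    case 2
    then show ?thesis by (intro that[of "M2 0 1 a3 (- a1)"]) (simp_all add: a algebra_simps)
  next
    case 3
    then have "- 2 * a1 \<noteq> 0" using assms(3) by simp
    with 3 show ?thesis by (intro that[of "M2 1 1 a1 (- a1)"]) (simp_all add: a algebra_simps)
  qed
qed

lemma m2_traceless_similar:
  fixes a a' :: "'k::field mat2"
  assumes "m2_trace a = 0" "a \<noteq> m2_zero" "m2_trace a' = 0" "a' \<noteq> m2_zero"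
    and "m2_det a = m2_det a'" and "(2::'k) \<noteq> 0"
  obtains p where "m2_det p \<noteq> 0" "m2_mult p a = m2_mult a' p"
proof -
  define K where "K = M2 0 1 (- m2_det a) (0::'k)"
  obtain p where p: "m2_det p \<noteq> 0" "m2_mult p a = m2_mult K p"
    using m2_similar_companion[OF assms(1,2,6)] K_def by blast
  obtain p' where p': "m2_det p' \<noteq> 0" "m2_mult p' a' = m2_mult K p'"
    using m2_similar_companion[OF assms(3,4,6)] K_def assms(5) by metis
  have "m2_smult (m2_det p') (m2_mult a' (m2_conj p')) =
        m2_mult (m2_conj p') (m2_mult (m2_mult p' a') (m2_conj p'))"
    by (simp add: m2_algebra_simps)
  also have "\<dots> = m2_smult (m2_det p') (m2_mult (m2_conj p') K)"
    by (simp add: p'(2) m2_algebra_simps m2_mult_conj_self)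
  finally have a'_conj: "m2_mult a' (m2_conj p') = m2_mult (m2_conj p') K"
    using m2_smult_cancel p'(1) by blast
  show ?thesis
  proof (rule that)
    show "m2_det (m2_mult (m2_conj p') p) \<noteq> 0" using p p' by (simp add: m2_det_mult)
    have "m2_mult (m2_mult (m2_conj p') p) a = m2_mult (m2_mult (m2_conj p') K) p"
      by (simp add: m2_mult_assoc p(2))
    also have "\<dots> = m2_mult a' (m2_mult (m2_conj p') p)"
      by (simp add: m2_mult_assoc flip: a'_conj)
    finally show "m2_mult (m2_mult (m2_conj p') p) a = m2_mult a' (m2_mult (m2_conj p') p)" .
  qed
qed

lemma m2_singular_row_reduce:
  fixes b :: "'k::field mat2"
  assumes "m2_det b = 0" "b \<noteq> m2_zero"
  obtains q x y where "m2_det q = 1" "m2_mult q b = M2 x y 0 0" "x \<noteq> 0 \<or> y \<noteq> 0"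
proof -
  obtain b1 b2 b3 b4 where b: "b = M2 b1 b2 b3 b4" by (cases b)
  have d: "b1 * b4 = b2 * b3" using assms b by simp
  consider "b1 \<noteq> 0" | "b1 = 0" "b2 \<noteq> 0" | "b1 = 0" "b2 = 0" "b3 \<noteq> 0 \<or> b4 \<noteq> 0"
    using assms(2) b by (auto simp: m2_zero_def)
  then show ?thesis
  proof cases
    case 1
    then show ?thesis using d by (intro that[of "M2 1 0 (- b3 / b1) 1" b1 b2]) (simp_all add: b field_simps)
  next
    case 2
    then show ?thesis using d by (intro that[of "M2 1 0 (- b4 / b2) 1" 0 b2]) (simp_all add: b field_simps)
  next
    case 3
    then show ?thesis by (intro that[of "M2 0 1 (- 1) 0" b3 b4]) (simp_all add: b)
  qed
qed

section \<open>Automorphisms of the split octonions\<close>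

lemma oct_cases:
  obtains a1 a2 a3 a4 b1 b2 b3 b4 where "x = (M2 a1 a2 a3 a4, M2 b1 b2 b3 b4)"
  by (metis mat2.exhaust prod.collapse)

lemma fst_oct_smult [simp]: "fst (oct_smult s x) = m2_smult s (fst x)"
  by (simp add: oct_smult_def)

lemma oct_V_iff_traceless: "x \<in> oct_V \<longleftrightarrow> m2_trace (fst x) = 0"
  by (cases x rule: oct_cases)
     (simp add: oct_V_def oct_bil_def oct_norm_def oct_add_def oct_one_def m2_one_def
       m2_zero_def algebra_simps)

lemma oct_mult_self:
  "oct_mult x x = oct_add (oct_smult (m2_trace (fst x)) x) (oct_smult (- oct_norm x) oct_one)"
  by (cases x rule: oct_cases)
     (simp add: oct_mult_def oct_add_def oct_smult_def oct_norm_def oct_one_def m2_one_def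
       m2_zero_def algebra_simps)

lemma oct_norm_smult: "oct_norm (oct_smult s x) = s\<^sup>2 * oct_norm x"
  by (simp add: oct_norm_def oct_smult_def m2_det_smult algebra_simps)

lemma m2_trace_smult: "m2_trace (m2_smult s A) = s * m2_trace A"
  by (cases A) (simp add: algebra_simps)

lemma oct_smult_smult: "oct_smult s (oct_smult t x) = oct_smult (s * t) x"
  by (simp add: oct_smult_def m2_smult_smult)

lemma oct_smult_one_left [simp]: "oct_smult 1 x = x"
  by (simp add: oct_smult_def)

lemma oct_Vss_smult: "w \<in> oct_Vss \<Longrightarrow> c \<noteq> 0 \<Longrightarrow> oct_smult c w \<in> oct_Vss"
  by (simp add: oct_Vss_def oct_V_iff_traceless oct_norm_smult m2_trace_smult)

lemma oct_square_scalar_cases: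
  assumes "oct_mult x x = oct_smult c oct_one"
  shows "(m2_trace (fst x) = 0 \<and> oct_norm x = - c) \<or> (\<exists>s. x = oct_smult s oct_one)"
proof -
  obtain a1 a2 a3 a4 b1 b2 b3 b4 where x: "x = (M2 a1 a2 a3 a4, M2 b1 b2 b3 b4)"
    by (rule oct_cases)
  define t where "t = a1 + a4"
  have eqs: "oct_norm x = t * a1 - c" "t * a4 = t * a1" "t * a2 = 0" "t * a3 = 0"
    "t * b1 = 0" "t * b2 = 0" "t * b3 = 0" "t * b4 = 0"
    using assms oct_mult_self[of x]
    by (auto simp: x t_def oct_add_def oct_smult_def oct_one_def m2_one_def m2_zero_def)
  show ?thesis
  proof (cases "t = 0")
    case True
    then show ?thesis using eqs(1) by (simp add: x t_def)
  next
    case False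
    then have "x = oct_smult a1 oct_one" using eqs
      by (simp add: x oct_smult_def oct_one_def m2_one_def m2_zero_def)
    then show ?thesis by blast
  qed
qed

lemma oct_autD:
  assumes "\<phi> \<in> oct_aut"
  shows "bij \<phi>" "\<phi> (oct_add x y) = oct_add (\<phi> x) (\<phi> y)"
    "\<phi> (oct_smult s x) = oct_smult s (\<phi> x)" "\<phi> (oct_mult x y) = oct_mult (\<phi> x) (\<phi> y)"
    "\<phi> oct_one = oct_one"
  using assms unfolding oct_aut_def by blast+

lemma oct_aut_comp: "\<phi> \<in> oct_aut \<Longrightarrow> \<psi> \<in> oct_aut \<Longrightarrow> \<psi> \<circ> \<phi> \<in> oct_aut"
  unfolding oct_aut_def by (auto intro: bij_comp simp del: split_paired_All)

lemma oct_aut_inv: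
  assumes "\<phi> \<in> oct_aut"
  shows "inv \<phi> \<in> oct_aut"
proof -
  note \<phi> = oct_autD[OF assms]
  have inv_cancel: "\<phi> (inv \<phi> x) = x" for x
    using \<phi>(1) by (simp add: bij_is_surj surj_f_inv_f)
  have inj: "inj \<phi>" using \<phi>(1) bij_is_inj by blast
  have "inv \<phi> (oct_add x y) = oct_add (inv \<phi> x) (inv \<phi> y)" for x y
    by (rule injD[OF inj]) (simp add: inv_cancel \<phi>(2))
  moreover have "inv \<phi> (oct_smult s x) = oct_smult s (inv \<phi> x)" for s x
    by (rule injD[OF inj]) (simp add: inv_cancel \<phi>(3))
  moreover have "inv \<phi> (oct_mult x y) = oct_mult (inv \<phi> x) (inv \<phi> y)" for x y
    by (rule injD[OF inj]) (simp add: inv_cancel \<phi>(4))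
  moreover have "inv \<phi> oct_one = oct_one"
    by (rule injD[OF inj]) (simp add: inv_cancel \<phi>(5))
  ultimately show ?thesis using \<phi>(1) bij_imp_bij_inv unfolding oct_aut_def by blast
qed

lemma oct_aut_preserves_Vss:
  fixes v :: "'k::field oct"
  assumes \<phi>: "\<phi> \<in> oct_aut" and v: "v \<in> oct_Vss" and char: "(2::'k) \<noteq> 0"
  shows "\<phi> v \<in> oct_Vss" "oct_norm (\<phi> v) = oct_norm v"
proof -
  note \<phi>_hom = oct_autD[OF \<phi>]
  have tr: "m2_trace (fst v) = 0" and nv: "oct_norm v \<noteq> 0"
    using v by (auto simp: oct_Vss_def oct_V_iff_traceless)
  have \<phi>_scalar: "\<phi> (oct_smult s oct_one) = oct_smult s oct_one" for s
    by (simp add: \<phi>_hom(3,5))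
  have "oct_mult v v = oct_smult (- oct_norm v) oct_one"
    using oct_mult_self[of v] tr
    by (cases v rule: oct_cases) (simp add: oct_add_def oct_smult_def oct_one_def m2_one_def m2_zero_def)
  then have "oct_mult (\<phi> v) (\<phi> v) = oct_smult (- oct_norm v) oct_one"
    by (simp add: \<phi>_scalar flip: \<phi>_hom(4))
  moreover have "\<phi> v \<noteq> oct_smult s oct_one" for s
  proof
    assume "\<phi> v = oct_smult s oct_one"
    then have "v = oct_smult s oct_one"
      using \<phi>_hom(1) \<phi>_scalar by (metis bij_is_inj injD)
    then show False
      using tr nv char by (simp add: oct_smult_def oct_one_def oct_norm_def m2_one_def m2_zero_def)
  qed
  ultimately have "m2_trace (fst (\<phi> v)) = 0 \<and> oct_norm (\<phi> v) = oct_norm v"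
    using oct_square_scalar_cases by fastforce
  then show "\<phi> v \<in> oct_Vss" "oct_norm (\<phi> v) = oct_norm v"
    using nv by (simp_all add: oct_Vss_def oct_V_iff_traceless)
qed

text \<open>The map \<open>(a, b) \<mapsto> (p a p\<^sup>-\<^sup>1, q b p\<^sup>-\<^sup>1)\<close>; for \<open>det q = det p\<close> it is an automorphism
  of the Cayley--Dickson double.\<close>
definition oct_sandwich :: "'k::field mat2 \<Rightarrow> 'k mat2 \<Rightarrow> 'k oct \<Rightarrow> 'k oct" where
  "oct_sandwich p q x =
     (m2_smult (1 / m2_det p) (m2_mult p (m2_mult (fst x) (m2_conj p))),
      m2_smult (1 / m2_det p) (m2_mult q (m2_mult (snd x) (m2_conj p))))"

lemma oct_sandwich_inverse:
  assumes "m2_det p \<noteq> 0" "m2_det q = m2_det p"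
  shows "oct_sandwich (m2_conj p) (m2_conj q) (oct_sandwich p q x) = x"
  using assms unfolding oct_sandwich_def
  by (simp add: m2_algebra_simps m2_conj_mult_self)

lemma oct_sandwich_aut:
  assumes "m2_det p \<noteq> 0" "m2_det q = m2_det p"
  shows "oct_sandwich p q \<in> oct_aut"
proof -
  have "bij (oct_sandwich p q)"
    using oct_sandwich_inverse[OF assms] oct_sandwich_inverse[of "m2_conj p" "m2_conj q"] assms
    by (intro o_bij[of "oct_sandwich (m2_conj p) (m2_conj q)"]) auto
  moreover have "oct_sandwich p q (oct_mult x y) = oct_mult (oct_sandwich p q x) (oct_sandwich p q y)"
    for x y
    using assms unfolding oct_sandwich_def oct_mult_def
    by (simp add: m2_algebra_simps power2_eq_square)
  moreover have "oct_sandwich p q oct_one = oct_one"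
    using assms(1) by (simp add: oct_sandwich_def oct_one_def m2_mult_conj_self m2_smult_smult)
  ultimately show ?thesis
    unfolding oct_aut_def oct_sandwich_def oct_add_def oct_smult_def
    by (simp add: m2_algebra_simps mult.commute)
qed

text \<open>An involution of \<open>C\<close> mixing the two Cayley--Dickson halves; that it is an automorphism is
  a polynomial identity in the coordinates.\<close>
definition oct_mix :: "'k::field \<Rightarrow> 'k oct \<Rightarrow> 'k oct" where
  "oct_mix g x = (let h = inverse 2; g' = inverse g in case x of (M2 a1 a2 a3 a4, M2 b1 b2 b3 b4) \<Rightarrow>
     (M2 (h * (a1 + a4 + b1 + b4)) (h * (a2 - b2) + h * g' * (a3 - b3))
         (h * (g * (a2 + b2) + a3 + b3)) (h * (a1 + a4 - b1 - b4)),
      M2 (h * (a1 - a4 - b1 + b4)) (h * g' * (a3 + b3) - h * (a2 + b2))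
         (h * (g * (b2 - a2) - b3 + a3)) (h * (a1 - a4 + b1 - b4))))"

lemma oct_mix_aut:
  fixes g :: "'k::field"
  assumes "g \<noteq> 0" and "(2::'k) \<noteq> 0"
  shows "oct_mix g \<in> oct_aut"
proof -
  define h g' where "h = inverse (2::'k)" and "g' = inverse g"
  have inverses: "g * g' = 1" "2 * h = 1" using assms by (simp_all add: h_def g'_def)
  have involution: "oct_mix g (oct_mix g x) = x" for x
  proof (cases x rule: oct_cases)
    case (1 a1 a2 a3 a4 b1 b2 b3 b4)
    show ?thesis unfolding 1 oct_mix_def Let_def h_def[symmetric] g'_def[symmetric]
      by (simp only: prod.case mat2.case prod.inject mat2.inject)
         (intro conjI; use inverses in algebra)
  qed
  have "oct_mix g (oct_mult x y) = oct_mult (oct_mix g x) (oct_mix g y)" for x y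
  proof (cases x rule: oct_cases)
    case (1 a1 a2 a3 a4 b1 b2 b3 b4)
    obtain c1 c2 c3 c4 d1 d2 d3 d4 where y: "y = (M2 c1 c2 c3 c4, M2 d1 d2 d3 d4)"
      by (rule oct_cases)
    show ?thesis unfolding 1 y oct_mix_def Let_def oct_mult_def h_def[symmetric] g'_def[symmetric]
      by (simp only: prod.case mat2.case prod.inject mat2.inject fst_conv snd_conv
          m2_mult.simps m2_add.simps m2_conj.simps)
         (intro conjI; use inverses in algebra)
  qed
  moreover have "oct_mix g (oct_add x y) = oct_add (oct_mix g x) (oct_mix g y)" for x y
    by (cases x rule: oct_cases; cases y rule: oct_cases)
       (simp add: oct_mix_def oct_add_def Let_def algebra_simps)
  moreover have "oct_mix g (oct_smult s x) = oct_smult s (oct_mix g x)" for s x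
    by (cases x rule: oct_cases) (simp add: oct_mix_def oct_smult_def Let_def algebra_simps)
  moreover have "oct_mix g oct_one = oct_one"
    using assms(2) by (simp add: oct_mix_def oct_one_def m2_one_def m2_zero_def)
  moreover have "bij (oct_mix g)"
    using involution by (intro o_bij[of "oct_mix g"]) auto
  ultimately show ?thesis unfolding oct_aut_def by blast
qed

section \<open>Transitivity on elements of fixed norm\<close>

lemma m2_sandwich_eq:
  assumes "m2_det p \<noteq> 0" and "m2_mult q b = m2_mult b' p"
  shows "m2_smult (1 / m2_det p) (m2_mult q (m2_mult b (m2_conj p))) = b'"
proof -
  have "m2_mult q (m2_mult b (m2_conj p)) = m2_mult (m2_mult q b) (m2_conj p)"
    by (simp add: m2_mult_assoc)
  also have "\<dots> = m2_smult (m2_det p) b'"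
    by (simp add: assms(2) m2_mult_assoc m2_mult_conj_self m2_mult_smult_right)
  finally show ?thesis using assms(1) by (simp add: m2_smult_smult)
qed

lemma oct_sandwich_Pair:
  assumes "m2_det p \<noteq> 0" "m2_mult p a = m2_mult a' p" "m2_mult q b = m2_mult b' p"
  shows "oct_sandwich p q (a, b) = (a', b')"
  using m2_sandwich_eq[OF assms(1,2)] m2_sandwich_eq[OF assms(1,3)] by (simp add: oct_sandwich_def)

lemma oct_aut_maps_pair:
  fixes a b a' b' :: "'k::field mat2"
  assumes char: "(2::'k) \<noteq> 0" and "m2_trace a = 0" "m2_trace a' = 0"
    and a: "(a = m2_zero \<and> a' = m2_zero) \<or> (a \<noteq> m2_zero \<and> a' \<noteq> m2_zero \<and> m2_det a = m2_det a')"
    and b: "(b = m2_zero \<and> b' = m2_zero) \<or> (m2_det b \<noteq> 0 \<and> m2_det b = m2_det b')"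
  shows "\<exists>\<phi>\<in>oct_aut. \<phi> (a, b) = (a', b')"
proof -
  obtain p where p: "m2_det p \<noteq> 0" "m2_mult p a = m2_mult a' p"
  proof (cases "a = m2_zero")
    case True
    with a show ?thesis by (intro that[of m2_one]) simp_all
  next
    case False
    with a show ?thesis using m2_traceless_similar assms(2,3) char that by metis
  qed
  obtain q where q: "m2_det q = m2_det p" "m2_mult q b = m2_mult b' p"
  proof (cases "b = m2_zero")
    case True
    with b show ?thesis by (intro that[of p]) simp_all
  next
    case False
    with b have det_b: "m2_det b \<noteq> 0" "m2_det b' = m2_det b" by auto
    show ?thesis
    proof (rule that[of "m2_smult (1 / m2_det b) (m2_mult b' (m2_mult p (m2_conj b)))"])
      show "m2_det (m2_smult (1 / m2_det b) (m2_mult b' (m2_mult p (m2_conj b)))) = m2_det p"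
        using det_b by (simp add: m2_det_smult m2_det_mult power2_eq_square)
      show "m2_mult (m2_smult (1 / m2_det b) (m2_mult b' (m2_mult p (m2_conj b)))) b = m2_mult b' p"
        using det_b(1) by (simp add: m2_mult_assoc m2_mult_smult_left m2_conj_mult_self
            m2_mult_smult_right m2_smult_smult)
    qed
  qed
  show ?thesis using oct_sandwich_aut[OF p(1) q(1)] oct_sandwich_Pair[OF p q(2)] by blast
qed

lemma diff_squares_halves:
  assumes "(2::'k::field) \<noteq> 0"
  shows "(d + 1) / 2 - (d - 1) / 2 = (1::'k)" "((d + 1) / 2)\<^sup>2 - ((d - 1) / 2)\<^sup>2 = (d::'k)"
proof -
  show diff: "(d + 1) / 2 - (d - 1) / 2 = (1::'k)"
    using assms by (simp add: diff_divide_distrib[symmetric])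
  have "(d + 1) / 2 + (d - 1) / 2 = d"
    using assms by (simp add: add_divide_distrib[symmetric] mult_2[symmetric])
  moreover have "x\<^sup>2 - y\<^sup>2 = (x - y) * (x + y)" for x y :: 'k
    by (simp add: power2_eq_square algebra_simps)
  ultimately show "((d + 1) / 2)\<^sup>2 - ((d - 1) / 2)\<^sup>2 = d" using diff by simp
qed

definition oct_std :: "'k::field \<Rightarrow> 'k oct" where
  "oct_std n = (m2_zero, M2 0 1 n 0)"

lemma oct_std_Vss: "n \<noteq> 0 \<Longrightarrow> oct_std n \<in> oct_Vss \<and> oct_norm (oct_std n) = n"
  by (simp add: oct_std_def oct_Vss_def oct_V_iff_traceless oct_norm_def m2_zero_def)

lemma oct_aut_to_split_pair:
  fixes a b :: "'k::field mat2"
  assumes char: "(2::'k) \<noteq> 0" and tr: "m2_trace a = 0" and "a \<noteq> m2_zero"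
    and b: "b = m2_zero \<or> m2_det b \<noteq> 0"
  shows "\<exists>\<phi>\<in>oct_aut. \<exists>s t s' t'. \<phi> (a, b) = (M2 s t (- t) (- s), M2 s' t' (- t') (- s'))
           \<and> m2_det a = t\<^sup>2 - s\<^sup>2 \<and> m2_det b = t'\<^sup>2 - s'\<^sup>2"
proof -
  define s t where "s = (m2_det a - 1) / 2" and "t = (m2_det a + 1) / 2"
  have st: "t - s = 1" "m2_det a = t\<^sup>2 - s\<^sup>2"
    using diff_squares_halves[OF char] by (simp_all add: s_def t_def)
  obtain s' t' where st': "m2_det b = t'\<^sup>2 - s'\<^sup>2" "b = m2_zero \<Longrightarrow> s' = 0 \<and> t' = 0"
  proof (cases "b = m2_zero")
    case True
    then show ?thesis by (intro that[of 0 0]) simp_all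
  next
    case False
    then show ?thesis using diff_squares_halves(2)[OF char]
      by (intro that[of "(m2_det b + 1) / 2" "(m2_det b - 1) / 2"]) simp_all
  qed
  have "M2 s t (- t) (- s) \<noteq> m2_zero" using st(1) by (auto simp: m2_zero_def)
  moreover have "b = m2_zero \<and> M2 s' t' (- t') (- s') = m2_zero
      \<or> m2_det b \<noteq> 0 \<and> m2_det b = m2_det (M2 s' t' (- t') (- s'))"
    using b st' by (auto simp: m2_zero_def power2_eq_square)
  ultimately obtain \<phi> where "\<phi> \<in> oct_aut" "\<phi> (a, b) = (M2 s t (- t) (- s), M2 s' t' (- t') (- s'))"
    using oct_aut_maps_pair[OF char tr, of "M2 s t (- t) (- s)" b "M2 s' t' (- t') (- s')"]
      \<open>a \<noteq> m2_zero\<close> st(2)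
    by (auto simp: power2_eq_square)
  then show ?thesis using st(2) st'(1) by blast
qed

lemma oct_mix_one_split:
  fixes s t s' t' :: "'k::field"
  assumes "(2::'k) \<noteq> 0"
  shows "oct_mix 1 (M2 s t (- t) (- s), M2 s' t' (- t') (- s')) =
           (m2_zero, M2 (s - s') (- (t + t')) (t' - t) (s + s'))"
  using assms by (simp add: oct_mix_def m2_zero_def field_simps)

lemma oct_aut_split_pair_to_std:
  fixes s t s' t' :: "'k::field"
  assumes char: "(2::'k) \<noteq> 0" and n: "(t\<^sup>2 - s\<^sup>2) - (t'\<^sup>2 - s'\<^sup>2) = n" "n \<noteq> 0"
  shows "\<exists>\<phi>\<in>oct_aut. \<phi> (M2 s t (- t) (- s), M2 s' t' (- t') (- s')) = oct_std n"
proof -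
  define b where "b = M2 (s - s') (- (t + t')) (t' - t) (s + s')"
  have "m2_det b = - n" using n(1) by (auto simp: b_def algebra_simps power2_eq_square)
  then obtain \<psi> where \<psi>: "\<psi> \<in> oct_aut" "\<psi> (m2_zero, b) = oct_std n"
    using oct_aut_maps_pair[of m2_zero m2_zero b "M2 0 1 n 0"] char n(2)
    by (auto simp: oct_std_def m2_zero_def)
  have "\<psi> \<circ> oct_mix 1 \<in> oct_aut"
    using oct_mix_aut[OF one_neq_zero char] \<psi>(1) by (rule oct_aut_comp)
  moreover have "(\<psi> \<circ> oct_mix 1) (M2 s t (- t) (- s), M2 s' t' (- t') (- s')) = oct_std n"
    using \<psi>(2) oct_mix_one_split[OF char] by (simp add: b_def)
  ultimately show ?thesis by blast
qed

lemma oct_aut_to_std_regular: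
  fixes a b :: "'k::field mat2"
  assumes char: "(2::'k) \<noteq> 0" and tr: "m2_trace a = 0" and b: "b = m2_zero \<or> m2_det b \<noteq> 0"
    and n: "m2_det a - m2_det b = n" "n \<noteq> 0"
  shows "\<exists>\<phi>\<in>oct_aut. \<phi> (a, b) = oct_std n"
proof (cases "a = m2_zero")
  case True
  with b n have "m2_det b \<noteq> 0" "m2_det b = m2_det (M2 0 1 n 0)" by auto
  with True show ?thesis
    using oct_aut_maps_pair[OF char tr, of m2_zero b "M2 0 1 n 0"] by (simp add: oct_std_def m2_zero_def)
next
  case False
  then obtain \<phi> s t s' t' where \<phi>: "\<phi> \<in> oct_aut"
      "\<phi> (a, b) = (M2 s t (- t) (- s), M2 s' t' (- t') (- s'))"
      "m2_det a = t\<^sup>2 - s\<^sup>2" "m2_det b = t'\<^sup>2 - s'\<^sup>2"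
    using oct_aut_to_split_pair[OF char tr _ b] by blast
  moreover obtain \<psi> where "\<psi> \<in> oct_aut" "\<psi> (M2 s t (- t) (- s), M2 s' t' (- t') (- s')) = oct_std n"
    using oct_aut_split_pair_to_std[OF char _ n(2)] n(1) \<phi>(3,4) by metis
  ultimately show ?thesis using oct_aut_comp by (metis comp_apply)
qed

lemma oct_aut_to_companion_row:
  fixes a b :: "'k::field mat2"
  assumes char: "(2::'k) \<noteq> 0" and tr: "m2_trace a = 0"
    and b: "m2_det b = 0" "b \<noteq> m2_zero" and n: "m2_det a = n" "n \<noteq> 0"
  shows "\<exists>\<phi>\<in>oct_aut. \<exists>x y. (x \<noteq> 0 \<or> y \<noteq> 0) \<and> \<phi> (a, b) = (M2 0 1 (- n) 0, M2 x y 0 0)"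
proof -
  define K where "K = M2 0 1 (- n) (0::'k)"
  have "a \<noteq> m2_zero" using n by auto
  then obtain p where p: "m2_det p \<noteq> 0" "m2_mult p a = m2_mult K p"
    using m2_similar_companion[OF tr _ char] n unfolding K_def by metis
  define b1 where "b1 = m2_smult (1 / m2_det p) (m2_mult p (m2_mult b (m2_conj p)))"
  have to_K: "oct_sandwich p p (a, b) = (K, b1)"
    using m2_sandwich_eq[OF p] by (simp add: oct_sandwich_def b1_def)
  have "m2_det b1 = 0" using b(1) by (simp add: b1_def m2_det_smult m2_det_mult)
  moreover have "b1 \<noteq> m2_zero"
  proof
    assume "b1 = m2_zero"
    then have "(a, b) = oct_sandwich (m2_conj p) (m2_conj p) (K, m2_zero)"
      using oct_sandwich_inverse[OF p(1) refl, of "(a, b)"] to_K by simp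
    then show False using b(2) by (simp add: oct_sandwich_def)
  qed
  ultimately obtain q x y where q: "m2_det q = 1" "m2_mult q b1 = M2 x y 0 0" "x \<noteq> 0 \<or> y \<noteq> 0"
    by (rule m2_singular_row_reduce)
  have "oct_sandwich m2_one q (K, b1) = (K, M2 x y 0 0)"
    using q(2) by (intro oct_sandwich_Pair) simp_all
  moreover have "oct_sandwich m2_one q \<circ> oct_sandwich p p \<in> oct_aut"
    using oct_aut_comp[OF oct_sandwich_aut[OF p(1) refl] oct_sandwich_aut[of m2_one q]] q(1) by simp
  ultimately show ?thesis using to_K q(3) unfolding K_def by (metis comp_apply)
qed

lemma oct_mix_companion_det:
  fixes n x y :: "'k::field"
  assumes "n \<noteq> 0" and "(2::'k) \<noteq> 0"
  shows "m2_det (snd (oct_mix (- n) (M2 0 1 (- n) 0, M2 x y 0 0))) = - (x\<^sup>2 + n * y\<^sup>2) / 4"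
    and "x\<^sup>2 = - n \<Longrightarrow> m2_det (snd (oct_mix n (M2 0 1 (- n) 0, M2 x 1 0 0))) = - n / 2"
  using assms four_neq_zero[OF assms(2)]
  by (simp_all add: oct_mix_def field_simps power2_eq_square)

lemma oct_aut_regularize_companion_row:
  fixes n x y :: "'k::field"
  assumes char: "(2::'k) \<noteq> 0" and n: "n \<noteq> 0" and xy: "x \<noteq> 0 \<or> y \<noteq> 0"
  shows "\<exists>\<chi>\<in>oct_aut. m2_det (snd (\<chi> (M2 0 1 (- n) 0, M2 x y 0 0))) \<noteq> 0"
proof (cases "x\<^sup>2 + n * y\<^sup>2 = 0")
  case False
  then have "m2_det (snd (oct_mix (- n) (M2 0 1 (- n) 0, M2 x y 0 0))) \<noteq> 0"
    using oct_mix_companion_det(1)[OF n char] four_neq_zero[OF char]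
    by (metis divide_eq_0_iff neg_equal_0_iff_equal)
  then show ?thesis using oct_mix_aut n char by (metis neg_equal_0_iff_equal)
next
  case True
  then have "y \<noteq> 0" using xy by auto
  define x' where "x' = x / y"
  have "x'\<^sup>2 = - n"
    using True \<open>y \<noteq> 0\<close> by (simp add: x'_def field_simps power2_eq_square eq_neg_iff_add_eq_0)
  then have "m2_det (snd (oct_mix n (M2 0 1 (- n) 0, M2 x' 1 0 0))) \<noteq> 0"
    using oct_mix_companion_det(2)[OF n char] n char by simp
  moreover have "oct_sandwich m2_one (M2 (1 / y) 0 0 y) (M2 0 1 (- n) 0, M2 x y 0 0)
      = (M2 0 1 (- n) 0, M2 x' 1 0 0)"
    using \<open>y \<noteq> 0\<close> by (intro oct_sandwich_Pair) (simp_all add: x'_def)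
  moreover have "oct_mix n \<circ> oct_sandwich m2_one (M2 (1 / y) 0 0 y) \<in> oct_aut"
    using \<open>y \<noteq> 0\<close> oct_sandwich_aut[of m2_one "M2 (1 / y) 0 0 y"] oct_mix_aut[OF n char]
    by (simp add: oct_aut_comp)
  ultimately show ?thesis by (metis comp_apply)
qed

lemma oct_aut_to_std:
  fixes v :: "'k::field oct"
  assumes v: "v \<in> oct_Vss" and char: "(2::'k) \<noteq> 0"
  shows "\<exists>\<phi>\<in>oct_aut. \<phi> v = oct_std (oct_norm v)"
proof -
  have std: "\<exists>\<phi>\<in>oct_aut. \<phi> w = oct_std (oct_norm w)"
    if "w \<in> oct_Vss" "snd w = m2_zero \<or> m2_det (snd w) \<noteq> 0" for w :: "'k oct"
    using oct_aut_to_std_regular[OF char, of "fst w" "snd w" "oct_norm w"] that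
    by (simp add: oct_Vss_def oct_V_iff_traceless oct_norm_def)
  show ?thesis
  proof (cases "snd v = m2_zero \<or> m2_det (snd v) \<noteq> 0")
    case True
    then show ?thesis using std v by blast
  next
    case False
    then have b: "m2_det (snd v) = 0" "snd v \<noteq> m2_zero" by auto
    have n: "m2_det (fst v) = oct_norm v" "oct_norm v \<noteq> 0"
      using v b(1) by (simp_all add: oct_Vss_def oct_norm_def)
    obtain \<phi>1 x y where \<phi>1: "\<phi>1 \<in> oct_aut" "x \<noteq> 0 \<or> y \<noteq> 0"
        "\<phi>1 v = (M2 0 1 (- oct_norm v) 0, M2 x y 0 0)"
      using oct_aut_to_companion_row[OF char _ b n] v by (auto simp: oct_Vss_def oct_V_iff_traceless)
    obtain \<phi>2 where "\<phi>2 \<in> oct_aut" "m2_det (snd (\<phi>2 (\<phi>1 v))) \<noteq> 0"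
      using oct_aut_regularize_companion_row[OF char n(2) \<phi>1(2)] \<phi>1(3) by auto
    then have \<phi>: "\<phi>2 \<circ> \<phi>1 \<in> oct_aut" "m2_det (snd ((\<phi>2 \<circ> \<phi>1) v)) \<noteq> 0"
      using oct_aut_comp[OF \<phi>1(1)] by auto
    moreover obtain \<psi> where "\<psi> \<in> oct_aut" "\<psi> ((\<phi>2 \<circ> \<phi>1) v) = oct_std (oct_norm v)"
      using std[of "(\<phi>2 \<circ> \<phi>1) v"] \<phi> oct_aut_preserves_Vss[OF \<phi>(1) v char] by auto
    ultimately show ?thesis using oct_aut_comp by (metis comp_apply)
  qed
qed

lemma sq_class_eq_refl: "sq_class_eq s s"
  unfolding sq_class_eq_def by (rule exI[of _ 1]) simp

lemma sq_class_eq_sym: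
  assumes "sq_class_eq s t"
  shows "sq_class_eq t s"
proof -
  obtain c where c: "c \<noteq> 0" "t = c\<^sup>2 * s" using assms unfolding sq_class_eq_def by blast
  then have "s = (1 / c)\<^sup>2 * t" by (simp add: power_divide)
  then show ?thesis unfolding sq_class_eq_def using c(1) by (intro exI[of _ "1 / c"]) simp
qed

lemma sq_class_eq_trans: "sq_class_eq s t \<Longrightarrow> sq_class_eq t u \<Longrightarrow> sq_class_eq s u"
  unfolding sq_class_eq_def by (metis mult.assoc mult_eq_0_iff power_mult_distrib)

lemma oct_orbit_rel_iff:
  fixes v w :: "'k::field oct"
  assumes char: "(2::'k) \<noteq> 0" and v: "v \<in> oct_Vss" and w: "w \<in> oct_Vss"
  shows "(v, w) \<in> oct_orbit_rel \<longleftrightarrow> sq_class_eq (oct_norm v) (oct_norm w)"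
proof
  assume "(v, w) \<in> oct_orbit_rel"
  then obtain \<phi> a where \<phi>: "\<phi> \<in> oct_aut" "a \<noteq> 0" "w = oct_smult a (\<phi> v)"
    unfolding oct_orbit_rel_def by blast
  then have "oct_norm w = a\<^sup>2 * oct_norm v"
    using oct_aut_preserves_Vss[OF \<phi>(1) v char] by (simp add: oct_norm_smult)
  then show "sq_class_eq (oct_norm v) (oct_norm w)" unfolding sq_class_eq_def using \<phi>(2) by blast
next
  assume "sq_class_eq (oct_norm v) (oct_norm w)"
  then obtain c where c: "c \<noteq> 0" "oct_norm w = c\<^sup>2 * oct_norm v" unfolding sq_class_eq_def by blast
  define w' where "w' = oct_smult (1 / c) w"
  have w': "w' \<in> oct_Vss" "oct_norm w' = oct_norm v"
    using oct_Vss_smult[OF w] c by (simp_all add: w'_def oct_norm_smult power_divide)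
  obtain \<phi> where \<phi>: "\<phi> \<in> oct_aut" "\<phi> v = oct_std (oct_norm v)"
    using oct_aut_to_std[OF v char] by blast
  obtain \<psi> where \<psi>: "\<psi> \<in> oct_aut" "\<psi> w' = oct_std (oct_norm v)"
    using oct_aut_to_std[OF w'(1) char] w'(2) by auto
  have "(inv \<psi> \<circ> \<phi>) v = w'"
    using \<phi>(2) by (simp add: inv_f_f[OF bij_is_inj[OF oct_autD(1)[OF \<psi>(1)]]] flip: \<psi>(2))
  moreover have "w = oct_smult c w'" using c(1) by (simp add: w'_def oct_smult_smult)
  ultimately show "(v, w) \<in> oct_orbit_rel"
    unfolding oct_orbit_rel_def using v w c(1) oct_aut_comp[OF \<phi>(1) oct_aut_inv[OF \<psi>(1)]] by blast
qed

lemma oct_orbit_rel_equiv: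
  assumes "(2::'k::field) \<noteq> 0"
  shows "equiv (oct_Vss :: 'k oct set) oct_orbit_rel"
proof (rule equivI)
  have sub: "oct_orbit_rel \<subseteq> (oct_Vss :: 'k oct set) \<times> oct_Vss"
    unfolding oct_orbit_rel_def by auto
  with oct_orbit_rel_iff[OF assms] show "oct_orbit_rel \<subseteq> (oct_Vss :: 'k oct set) \<times> oct_Vss"
    "refl_on (oct_Vss :: 'k oct set) oct_orbit_rel" "sym (oct_orbit_rel :: 'k oct rel)"
    "trans (oct_orbit_rel :: 'k oct rel)"
    unfolding refl_on_def sym_def trans_def
    by (blast intro: sq_class_eq_refl sq_class_eq_sym sq_class_eq_trans)+
qed

section \<open>Two-dimensional composition algebras\<close>

lemma v2_add_Pair [simp]: "v2_add (a, b) (c, d) = (a + c, b + d)"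
  by (simp add: v2_add_def)

lemma v2_smult_Pair [simp]: "v2_smult s (a, b) = (s * a, s * b)"
  by (simp add: v2_smult_def)

text \<open>The algebra \<open>k[X]/(X\<^sup>2 - t)\<close> in the basis \<open>1, X\<close>, with its norm.\<close>
definition quad_mult :: "'k::field \<Rightarrow> 'k \<times> 'k \<Rightarrow> 'k \<times> 'k \<Rightarrow> 'k \<times> 'k" where
  "quad_mult t x y = (fst x * fst y + t * (snd x * snd y), fst x * snd y + snd x * fst y)"

definition quad_norm :: "'k::field \<Rightarrow> 'k \<times> 'k \<Rightarrow> 'k" where
  "quad_norm t x = (fst x)\<^sup>2 - t * (snd x)\<^sup>2"

lemma quad_comp_alg2:
  fixes t :: "'k::field"
  assumes char: "(2::'k) \<noteq> 0" and t: "t \<noteq> 0"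
  shows "(quad_mult t, quad_norm t) \<in> comp_alg2"
proof -
  have nondeg: "x = (0, 0)" if "\<forall>y. quad_norm t (v2_add x y) - quad_norm t x - quad_norm t y = 0"
    for x :: "'k \<times> 'k"
  proof -
    obtain x1 x2 where x: "x = (x1, x2)" by (cases x)
    from that have "quad_norm t (v2_add x (1, 0)) - quad_norm t x - quad_norm t (1, 0) = 0"
      and "quad_norm t (v2_add x (0, 1)) - quad_norm t x - quad_norm t (0, 1) = 0" by blast+
    then have "2 * x1 = 0" "2 * t * x2 = 0"
      by (simp_all add: x quad_norm_def algebra_simps power2_eq_square)
    then show ?thesis using char t x by simp
  qed
  show ?thesis
    unfolding comp_alg2_def mem_Collect_eq case_prod_conv
    by (intro conjI exI[of _ "(1, 0)"] allI impI nondeg)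
       (auto simp: quad_mult_def quad_norm_def v2_add_def v2_smult_def algebra_simps power2_eq_square)
qed

lemma comp_alg2_iso_iff:
  "((m, N), (m', N')) \<in> comp_alg2_iso \<longleftrightarrow> (m, N) \<in> comp_alg2 \<and> (m', N') \<in> comp_alg2 \<and>
     (\<exists>f. bij f \<and> v2_linear f \<and> (\<forall>x y. f (m x y) = m' (f x) (f y)) \<and> (\<forall>x. N' (f x) = N x))"
  unfolding comp_alg2_iso_def by simp

lemma v2_linearD:
  assumes "v2_linear f"
  shows "f (v2_add x y) = v2_add (f x) (f y)" "f (v2_smult s x) = v2_smult s (f x)"
  using assms unfolding v2_linear_def by blast+

lemma v2_linear_inv:
  assumes "bij f" and "v2_linear f"
  shows "v2_linear (inv f)"
proof -
  have inv_cancel: "f (inv f x) = x" for x using assms(1) by (simp add: bij_is_surj surj_f_inv_f)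
  have inj: "inj f" using assms(1) by (rule bij_is_inj)
  have "inv f (v2_add x y) = v2_add (inv f x) (inv f y)" for x y
    by (rule injD[OF inj]) (simp add: inv_cancel v2_linearD[OF assms(2)])
  moreover have "inv f (v2_smult s x) = v2_smult s (inv f x)" for s x
    by (rule injD[OF inj]) (simp add: inv_cancel v2_linearD[OF assms(2)])
  ultimately show ?thesis unfolding v2_linear_def by blast
qed

lemma comp_alg2_iso_refl: "(m, N) \<in> comp_alg2 \<Longrightarrow> ((m, N), (m, N)) \<in> comp_alg2_iso"
  unfolding comp_alg2_iso_iff by (intro conjI exI[of _ id]) (auto simp: v2_linear_def)

lemma comp_alg2_iso_sym:
  assumes "((m, N), (m', N')) \<in> comp_alg2_iso"
  shows "((m', N'), (m, N)) \<in> comp_alg2_iso"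
proof -
  obtain f where f: "bij f" "v2_linear f" "\<And>x y. f (m x y) = m' (f x) (f y)" "\<And>x. N' (f x) = N x"
    and comp: "(m, N) \<in> comp_alg2" "(m', N') \<in> comp_alg2"
    using assms unfolding comp_alg2_iso_iff by blast
  have inv_cancel: "f (inv f x) = x" for x using f(1) by (simp add: bij_is_surj surj_f_inv_f)
  have "inv f (m' x y) = m (inv f x) (inv f y)" for x y
    by (rule injD[OF bij_is_inj[OF f(1)]]) (simp add: inv_cancel f(3))
  moreover have "N (inv f x) = N' x" for x by (metis f(4) inv_cancel)
  ultimately show ?thesis
    unfolding comp_alg2_iso_iff using comp bij_imp_bij_inv[OF f(1)] v2_linear_inv[OF f(1,2)] by blast
qed

lemma comp_alg2_iso_trans:
  assumes "((m, N), (m', N')) \<in> comp_alg2_iso" "((m', N'), (m'', N'')) \<in> comp_alg2_iso"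
  shows "((m, N), (m'', N'')) \<in> comp_alg2_iso"
proof -
  obtain f where f: "bij f" "v2_linear f" "\<And>x y. f (m x y) = m' (f x) (f y)" "\<And>x. N' (f x) = N x"
    and comp: "(m, N) \<in> comp_alg2"
    using assms(1) unfolding comp_alg2_iso_iff by blast
  obtain g where g: "bij g" "v2_linear g" "\<And>x y. g (m' x y) = m'' (g x) (g y)" "\<And>x. N'' (g x) = N' x"
    and comp': "(m'', N'') \<in> comp_alg2"
    using assms(2) unfolding comp_alg2_iso_iff by blast
  have "v2_linear (g \<circ> f)"
    unfolding v2_linear_def by (simp add: v2_linearD f(2) g(2) del: v2_add_Pair v2_smult_Pair)
  then show ?thesis
    unfolding comp_alg2_iso_iff using comp comp' bij_comp[OF f(1) g(1)] f(3,4) g(3,4)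
    by (intro conjI exI[of _ "g \<circ> f"]) auto
qed

lemma comp_alg2_iso_equiv: "equiv comp_alg2 comp_alg2_iso"
proof (rule equivI)
  show "comp_alg2_iso \<subseteq> comp_alg2 \<times> comp_alg2" unfolding comp_alg2_iso_def by auto
  show "refl_on comp_alg2 comp_alg2_iso" unfolding refl_on_def using comp_alg2_iso_refl by auto
  show "sym comp_alg2_iso" unfolding sym_def using comp_alg2_iso_sym by auto
  show "trans comp_alg2_iso" unfolding trans_def using comp_alg2_iso_trans by fast
qed

lemma quad_iso_of_sq_class_eq:
  fixes s t :: "'k::field"
  assumes char: "(2::'k) \<noteq> 0" and "s \<noteq> 0" and "sq_class_eq s t"
  shows "((quad_mult s, quad_norm s), (quad_mult t, quad_norm t)) \<in> comp_alg2_iso"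
proof -
  obtain c where c: "c \<noteq> 0" "t = c\<^sup>2 * s" using assms(3) unfolding sq_class_eq_def by blast
  define f :: "'k \<times> 'k \<Rightarrow> 'k \<times> 'k" where "f x = (fst x, snd x / c)" for x
  have "bij f"
    by (rule o_bij[of "\<lambda>x. (fst x, snd x * c)"]) (use c(1) in \<open>auto simp: f_def\<close>)
  moreover have "v2_linear f"
    by (simp add: v2_linear_def f_def v2_add_def v2_smult_def add_divide_distrib)
  moreover have "\<forall>x y. f (quad_mult s x y) = quad_mult t (f x) (f y)"
    using c by (simp add: f_def quad_mult_def field_simps power2_eq_square)
  moreover have "\<forall>x. quad_norm t (f x) = quad_norm s x"
    using c by (simp add: f_def quad_norm_def field_simps power2_eq_square)
  moreover have "t \<noteq> 0" using c \<open>s \<noteq> 0\<close> by simp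
  ultimately show ?thesis
    unfolding comp_alg2_iso_iff using quad_comp_alg2[OF char] \<open>s \<noteq> 0\<close> by blast
qed

text \<open>An isomorphism fixes the identity \<open>(1, 0)\<close> and sends \<open>X\<close> to a square root \<open>(p, q)\<close> of
  \<open>s\<close> in \<open>k[X]/(X\<^sup>2 - t)\<close>; this forces \<open>p = 0\<close> and \<open>s = q\<^sup>2 t\<close>.\<close>
lemma sq_class_eq_of_quad_iso:
  fixes s t :: "'k::field"
  assumes char: "(2::'k) \<noteq> 0"
    and "((quad_mult s, quad_norm s), (quad_mult t, quad_norm t)) \<in> comp_alg2_iso"
  shows "sq_class_eq s t"
proof -
  obtain f where f: "bij f" "v2_linear f" "\<And>x y. f (quad_mult s x y) = quad_mult t (f x) (f y)"
    using assms(2) unfolding comp_alg2_iso_iff by blast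
  have "quad_mult t (f (1, 0)) (f y) = f y" for y
    using f(3)[of "(1, 0)" y] by (simp add: quad_mult_def)
  then have "quad_mult t (f (1, 0)) (1, 0) = (1, 0)"
    using f(1) by (metis bij_is_surj surjD)
  then have f_one: "f (1, 0) = (1, 0)" by (cases "f (1, 0)") (simp add: quad_mult_def)
  have f_scalar: "f (a, 0) = (a, 0)" for a
    using v2_linearD(2)[OF f(2), of a "(1, 0)"] by (simp add: f_one)
  obtain p q where pq: "f (0, 1) = (p, q)" by (cases "f (0, 1)")
  have "(s, 0) = f (quad_mult s (0, 1) (0, 1))" by (simp add: f_scalar quad_mult_def)
  also have "\<dots> = quad_mult t (p, q) (p, q)" by (simp only: f(3) pq)
  also have "\<dots> = (p * p + t * (q * q), 2 * (p * q))" by (simp add: quad_mult_def)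
  finally have s: "s = p * p + t * (q * q)" and "2 * (p * q) = 0" by simp_all
  then have "p * q = 0" using char by simp
  moreover have "q \<noteq> 0"
  proof
    assume "q = 0"
    then have "f (0, 1) = f (p, 0)" by (simp add: pq f_scalar)
    then show False using f(1) by (simp add: bij_is_inj inj_eq)
  qed
  ultimately have "t = (1 / q)\<^sup>2 * s" using s by (simp add: field_simps power2_eq_square)
  then show ?thesis unfolding sq_class_eq_def using \<open>q \<noteq> 0\<close> by (intro exI[of _ "1 / q"]) simp
qed

lemma quad_iso_iff_sq_class_eq:
  fixes s t :: "'k::field"
  assumes "(2::'k) \<noteq> 0" and "s \<noteq> 0"
  shows "((quad_mult s, quad_norm s), (quad_mult t, quad_norm t)) \<in> comp_alg2_iso \<longleftrightarrow> sq_class_eq s t"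
  using quad_iso_of_sq_class_eq sq_class_eq_of_quad_iso assms by blast

definition v2_comb :: "'k::field \<times> 'k \<Rightarrow> 'k \<times> 'k \<Rightarrow> 'k \<times> 'k \<Rightarrow> 'k \<times> 'k" where
  "v2_comb u w c = v2_add (v2_smult (fst c) u) (v2_smult (snd c) w)"

lemma v2_comb_linear: "v2_linear (v2_comb u w)"
  by (cases u; cases w) (simp add: v2_linear_def v2_comb_def v2_add_def v2_smult_def algebra_simps)

lemma v2_comb_bij:
  fixes u w :: "'k::field \<times> 'k"
  assumes "fst u * snd w - snd u * fst w \<noteq> 0"
  shows "bij (v2_comb u w)"
proof -
  obtain u1 u2 w1 w2 where uw: "u = (u1, u2)" "w = (w1, w2)" by (cases u; cases w)
  define D where "D = u1 * w2 - u2 * w1"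
  have D: "D \<noteq> 0" using assms by (simp add: uw D_def)
  define coords where "coords x = ((fst x * w2 - snd x * w1) / D, (u1 * snd x - u2 * fst x) / D)" for x
  have comb: "v2_comb u w (a, b) = (a * u1 + b * w1, a * u2 + b * w2)" for a b
    by (simp add: v2_comb_def uw)
  have "coords (v2_comb u w (a, b)) = (a, b)" for a b
  proof -
    have "(a * u1 + b * w1) * w2 - (a * u2 + b * w2) * w1 = a * D"
      "u1 * (a * u2 + b * w2) - u2 * (a * u1 + b * w1) = b * D"
      by (simp_all add: D_def algebra_simps)
    then show ?thesis using D by (simp add: coords_def comb)
  qed
  moreover have "v2_comb u w (coords (a, b)) = (a, b)" for a b
  proof -
    have "(a * w2 - b * w1) * u1 + (u1 * b - u2 * a) * w1 = a * D"
      "(a * w2 - b * w1) * u2 + (u1 * b - u2 * a) * w2 = b * D"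
      by (simp_all add: D_def algebra_simps)
    then show ?thesis using D by (simp add: coords_def comb add_divide_distrib[symmetric])
  qed
  ultimately show ?thesis by (intro o_bij[of coords]) auto
qed

locale comp_alg2_struct =
  fixes m :: "'k::field \<times> 'k \<Rightarrow> 'k \<times> 'k \<Rightarrow> 'k \<times> 'k" and N :: "'k \<times> 'k \<Rightarrow> 'k"
  assumes comp_alg: "(m, N) \<in> comp_alg2" and char: "(2::'k) \<noteq> 0"
begin

lemma mult_add_left: "m (v2_add x y) z = v2_add (m x z) (m y z)"
  using comp_alg unfolding comp_alg2_def mem_Collect_eq case_prod_conv by (elim conjE) blast

lemma mult_add_right: "m x (v2_add y z) = v2_add (m x y) (m x z)"
  using comp_alg unfolding comp_alg2_def mem_Collect_eq case_prod_conv by (elim conjE) blast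

lemma mult_smult_left: "m (v2_smult s x) y = v2_smult s (m x y)"
  using comp_alg unfolding comp_alg2_def mem_Collect_eq case_prod_conv by (elim conjE) blast

lemma mult_smult_right: "m x (v2_smult s y) = v2_smult s (m x y)"
  using comp_alg unfolding comp_alg2_def mem_Collect_eq case_prod_conv by (elim conjE) blast

lemma unit_exists: "\<exists>e. \<forall>x. m e x = x \<and> m x e = x"
  using comp_alg unfolding comp_alg2_def mem_Collect_eq case_prod_conv by (elim conjE) blast

lemma norm_smult: "N (v2_smult s x) = s\<^sup>2 * N x"
  using comp_alg unfolding comp_alg2_def mem_Collect_eq case_prod_conv by (elim conjE) blast

lemma norm_polar_add:
  "N (v2_add (v2_add x y) z) - N (v2_add x y) - N z
     = (N (v2_add x z) - N x - N z) + (N (v2_add y z) - N y - N z)"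
  using comp_alg unfolding comp_alg2_def mem_Collect_eq case_prod_conv by (elim conjE) blast

lemma nondegenerate: "(\<And>y. N (v2_add x y) - N x - N y = 0) \<Longrightarrow> x = (0, 0)"
  using comp_alg unfolding comp_alg2_def mem_Collect_eq case_prod_conv by (elim conjE) blast

lemma norm_mult: "N (m x y) = N x * N y"
  using comp_alg unfolding comp_alg2_def mem_Collect_eq case_prod_conv by (elim conjE allE) assumption

definition unit :: "'k \<times> 'k" where
  "unit = (SOME e. \<forall>x. m e x = x \<and> m x e = x)"

lemma unit_mult [simp]: "m unit x = x" "m x unit = x"
  using someI_ex[OF unit_exists] unfolding unit_def[symmetric] by blast+

definition polar :: "'k \<times> 'k \<Rightarrow> 'k \<times> 'k \<Rightarrow> 'k" where
  "polar x y = N (v2_add x y) - N x - N y"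

definition trace :: "'k \<times> 'k \<Rightarrow> 'k" where
  "trace x = polar x unit"

lemma norm_zero [simp]: "N (0, 0) = 0"
  using norm_smult[of 0 "(0, 0)"] by simp

lemma polar_commute: "polar x y = polar y x"
  by (cases x; cases y) (simp add: polar_def add.commute)

lemma polar_add_left: "polar (v2_add x y) z = polar x z + polar y z"
  using norm_polar_add unfolding polar_def .

lemma polar_add_right: "polar z (v2_add x y) = polar z x + polar z y"
  using polar_add_left polar_commute by metis

lemma polar_self: "polar x x = 2 * N x"
proof -
  have "v2_add x x = v2_smult 2 x" by (cases x) simp
  then have "polar x x = 2\<^sup>2 * N x - N x - N x" by (simp add: polar_def norm_smult)
  then show ?thesis by algebra
qed

lemma norm_unit [simp]: "N unit = 1"
proof -
  have "\<exists>x. N x \<noteq> 0"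
  proof (rule ccontr)
    assume "\<nexists>x. N x \<noteq> 0"
    then have "N x = 0" for x by blast
    then have "(1::'k, 0::'k) = (0, 0)" by (intro nondegenerate) simp
    then show False by simp
  qed
  then obtain x where "N x \<noteq> 0" by blast
  moreover have "N x = N unit * N x" using norm_mult[of unit x] by simp
  ultimately show ?thesis by simp
qed

lemma unit_nonzero: "unit \<noteq> (0, 0)"
  using norm_unit by force

lemma polar_mult_same: "polar (m u x) (m u y) = N u * polar x y"
  using norm_mult[of u "v2_add x y"] by (simp add: polar_def mult_add_right norm_mult algebra_simps)

lemma polar_mult_cross: "polar (m u x) (m v y) + polar (m v x) (m u y) = polar u v * polar x y"
proof -
  have "N (v2_add u v) * polar x y = polar (m (v2_add u v) x) (m (v2_add u v) y)"
    by (simp add: polar_mult_same)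
  also have "\<dots> = N u * polar x y + polar (m u x) (m v y) + (polar (m v x) (m u y) + N v * polar x y)"
    by (simp add: mult_add_left polar_add_left polar_add_right polar_mult_same)
  finally show ?thesis by (simp add: polar_def algebra_simps)
qed

lemma two_norm_eq: "2 * N x = (trace x)\<^sup>2 - trace (m x x)"
proof -
  have "trace (m x x) + 2 * N x = (trace x)\<^sup>2"
    using polar_mult_cross[of x x unit unit] by (simp add: trace_def polar_self power2_eq_square)
  then show ?thesis by (simp add: eq_diff_eq add.commute)
qed

lemma trace_add: "trace (v2_add x y) = trace x + trace y"
  by (simp add: trace_def polar_add_left)

lemma trace_smult_unit: "trace (v2_smult a unit) = 2 * a"
proof -
  have "v2_add (v2_smult a unit) unit = v2_smult (a + 1) unit" by (cases unit) (simp add: algebra_simps)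
  then have "trace (v2_smult a unit) = (a + 1)\<^sup>2 - a\<^sup>2 - 1"
    by (simp add: trace_def polar_def norm_smult)
  also have "\<dots> = 2 * a" by (simp add: power2_eq_square algebra_simps)
  finally show ?thesis .
qed

text \<open>Homogeneity of the trace is not part of the axioms; for elements with scalar square it
  follows from \<open>trace (b x)\<^sup>2 = b\<^sup>2 trace x\<^sup>2\<close> for all \<open>b\<close>, applied to \<open>b\<close> and \<open>b + 1\<close>.\<close>
lemma trace_smult_of_square:
  assumes sq: "m x x = v2_smult \<alpha> unit"
  shows "trace (v2_smult b x) = b * trace x"
proof -
  have trace_sq: "(trace (v2_smult b x))\<^sup>2 = b\<^sup>2 * (trace x)\<^sup>2" for b
  proof -
    have "m (v2_smult b x) (v2_smult b x) = v2_smult (b\<^sup>2 * \<alpha>) unit"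
      by (cases unit) (simp add: mult_smult_left mult_smult_right sq power2_eq_square algebra_simps)
    then have "2 * (b\<^sup>2 * N x) = (trace (v2_smult b x))\<^sup>2 - 2 * (b\<^sup>2 * \<alpha>)"
      using two_norm_eq[of "v2_smult b x"] by (simp add: norm_smult trace_smult_unit)
    moreover have "2 * N x = (trace x)\<^sup>2 - 2 * \<alpha>"
      using two_norm_eq[of x] by (simp add: sq trace_smult_unit)
    ultimately show ?thesis by algebra
  qed
  define t c where "t = trace (v2_smult b x)" and "c = trace x"
  have t_sq: "t\<^sup>2 = b\<^sup>2 * c\<^sup>2" using trace_sq[of b] by (simp add: t_def c_def)
  have "v2_add (v2_smult b x) x = v2_smult (b + 1) x" by (cases x) (simp add: algebra_simps)
  then have "(t + c)\<^sup>2 = (b + 1)\<^sup>2 * c\<^sup>2"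
    using trace_sq[of "b + 1"] trace_add[of "v2_smult b x" x] by (simp add: t_def c_def)
  with t_sq have "2 * (c * (t - b * c)) = 0" by algebra
  then have "c = 0 \<or> t = b * c" using char by simp
  then have "t = b * c" using t_sq by auto
  then show ?thesis by (simp add: t_def c_def)
qed

text \<open>A basis \<open>unit, pure\<close> with \<open>pure\<^sup>2\<close> a multiple \<open>disc\<close> of the unit, obtained by completing
  the square in the minimal equation of a vector \<open>compl\<close> independent of \<open>unit\<close>.\<close>
definition compl :: "'k \<times> 'k" where
  "compl = (if snd unit \<noteq> 0 then (1, 0) else (0, 1))"

definition compl_square_coords :: "'k \<times> 'k" where
  "compl_square_coords = inv (v2_comb unit compl) (m compl compl)"

definition pure :: "'k \<times> 'k" where
  "pure = v2_add compl (v2_smult (- (snd compl_square_coords / 2)) unit)"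

definition disc :: 'k where
  "disc = fst compl_square_coords + (snd compl_square_coords / 2)\<^sup>2"

definition embed :: "'k \<times> 'k \<Rightarrow> 'k \<times> 'k" where
  "embed = v2_comb unit pure"

lemma det_unit_compl: "fst unit * snd compl - snd unit * fst compl \<noteq> 0"
  using unit_nonzero by (cases unit) (auto simp: compl_def)

lemma det_unit_pure: "fst unit * snd pure - snd unit * fst pure \<noteq> 0"
proof -
  have "fst unit * snd pure - snd unit * fst pure = fst unit * snd compl - snd unit * fst compl"
    by (cases unit; cases compl) (simp add: pure_def algebra_simps)
  then show ?thesis using det_unit_compl by simp
qed

lemma pure_square: "m pure pure = v2_smult disc unit"
proof -
  obtain \<alpha> \<beta> where coords: "compl_square_coords = (\<alpha>, \<beta>)" by (cases compl_square_coords)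
  have "m compl compl = v2_comb unit compl (\<alpha>, \<beta>)"
    using v2_comb_bij[OF det_unit_compl] unfolding compl_square_coords_def coords[symmetric]
    by (simp add: bij_is_surj surj_f_inv_f)
  then have sq: "m compl compl = v2_add (v2_smult \<alpha> unit) (v2_smult \<beta> compl)"
    by (simp add: v2_comb_def)
  define \<gamma> where "\<gamma> = \<beta> / 2"
  have sq': "m compl compl = v2_add (v2_smult \<alpha> unit) (v2_smult (2 * \<gamma>) compl)"
    using sq char by (simp add: \<gamma>_def)
  show ?thesis
    unfolding pure_def disc_def coords snd_conv fst_conv \<gamma>_def[symmetric]
    by (simp add: mult_add_left mult_add_right mult_smult_left mult_smult_right sq')
       (cases unit; cases compl; simp add: power2_eq_square algebra_simps)
qed

lemma embed_Pair: "embed (a, b) = v2_add (v2_smult a unit) (v2_smult b pure)"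
  by (simp add: embed_def v2_comb_def)

lemma embed_bij: "bij embed"
  unfolding embed_def by (rule v2_comb_bij[OF det_unit_pure])

lemma embed_add: "embed (v2_add x y) = v2_add (embed x) (embed y)"
  using v2_comb_linear unfolding embed_def by (rule v2_linearD)

lemma embed_mult: "m (embed x) (embed y) = embed (quad_mult disc x y)"
  by (cases x; cases y)
     (simp add: embed_Pair quad_mult_def mult_add_left mult_add_right mult_smult_left
       mult_smult_right pure_square,
      cases unit; cases pure; simp add: algebra_simps)

lemma trace_embed: "trace (embed (a, b)) = 2 * a + b * trace pure"
  by (simp add: embed_Pair trace_add trace_smult_unit trace_smult_of_square[OF pure_square])

lemma two_norm_embed:
  "2 * N (embed (a, b)) = 2 * a\<^sup>2 + 2 * a * b * trace pure + b\<^sup>2 * ((trace pure)\<^sup>2 - 2 * disc)"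
proof -
  have "m (embed (a, b)) (embed (a, b)) = embed (a\<^sup>2 + disc * b\<^sup>2, 2 * a * b)"
    by (simp add: embed_mult quad_mult_def power2_eq_square algebra_simps)
  then show ?thesis
    using two_norm_eq[of "embed (a, b)"] by (simp add: trace_embed power2_eq_square algebra_simps)
qed

lemma norm_embed_not_square: "\<not> (\<forall>a b. N (embed (a, b)) = (a + b * l)\<^sup>2)"
proof
  assume sq: "\<forall>a b. N (embed (a, b)) = (a + b * l)\<^sup>2"
  have "embed (- l, 1) = (0, 0)"
  proof (rule nondegenerate)
    fix y
    obtain p q where y: "y = embed (p, q)" using embed_bij by (metis bij_pointE surj_pair)
    have "v2_add (embed (- l, 1)) y = embed (p - l, q + 1)" by (simp add: y algebra_simps flip: embed_add)
    then show "N (v2_add (embed (- l, 1)) y) - N (embed (- l, 1)) - N y = 0"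
      using sq by (simp add: y algebra_simps)
  qed
  moreover have "embed (0, 0) = (0, 0)" by (cases unit; cases pure) (simp add: embed_Pair)
  ultimately show False using embed_bij by (metis bij_is_inj inj_eq prod.inject zero_neq_one)
qed

lemma trace_pure: "trace pure = 0"
proof -
  define c where "c = trace pure"
  have pure_embed: "embed (0, 1) = pure" by (cases unit; cases pure) (simp add: embed_Pair)
  have norm_pure: "2 * N pure = c\<^sup>2 - 2 * disc"
    using two_norm_embed[of 0 1] by (simp add: pure_embed c_def)
  have "(N pure)\<^sup>2 = disc\<^sup>2"
    using norm_mult[of pure pure] by (simp add: pure_square norm_smult power2_eq_square)
  then consider "N pure = disc" | "N pure = - disc" by (auto simp: power2_eq_iff)
  then show ?thesis
  proof cases
    case 1
    define \<gamma> where "\<gamma> = c / 2"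
    have c: "c = 2 * \<gamma>" using char by (simp add: \<gamma>_def)
    with 1 norm_pure have disc: "disc = \<gamma>\<^sup>2"
      using four_neq_zero[OF char] by (simp add: power2_eq_square algebra_simps)
    have "2 * N (embed (a, b)) = 2 * (a + b * \<gamma>)\<^sup>2" for a b
      using two_norm_embed[of a b] unfolding c_def[symmetric] c disc
      by (simp add: power2_eq_square algebra_simps)
    then have "N (embed (a, b)) = (a + b * \<gamma>)\<^sup>2" for a b using char by simp
    then show ?thesis using norm_embed_not_square by blast
  next
    case 2
    then show ?thesis using norm_pure char by (simp add: c_def)
  qed
qed

lemma norm_embed: "N (embed x) = quad_norm disc x"
proof -
  obtain a b where x: "x = (a, b)" by (cases x)
  have "2 * N (embed (a, b)) = 2 * quad_norm disc (a, b)"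
    using two_norm_embed[of a b] by (simp add: trace_pure quad_norm_def algebra_simps)
  then show ?thesis using char by (simp add: x)
qed

lemma disc_nonzero: "disc \<noteq> 0"
proof
  assume "disc = 0"
  then have "\<forall>a b. N (embed (a, b)) = (a + b * 0)\<^sup>2" by (simp add: norm_embed quad_norm_def)
  then show False using norm_embed_not_square by blast
qed

lemma iso_quad: "((quad_mult disc, quad_norm disc), (m, N)) \<in> comp_alg2_iso"
  unfolding comp_alg2_iso_iff
  using quad_comp_alg2[OF char disc_nonzero] comp_alg embed_bij embed_mult norm_embed
    v2_comb_linear[of unit pure]
  by (auto simp: embed_def)

end

lemma comp_alg2_iso_quad:
  assumes "(m, N) \<in> comp_alg2" and "(2::'k::field) \<noteq> 0"
  shows "\<exists>t::'k. t \<noteq> 0 \<and> ((quad_mult t, quad_norm t), (m, N)) \<in> comp_alg2_iso"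
proof -
  interpret comp_alg2_struct m N using assms by unfold_locales
  show ?thesis using disc_nonzero iso_quad by blast
qed

section \<open>The orbit classification\<close>

lemma Image_image_equiv_class:
  assumes R: "equiv A R" and S: "equiv B S" and "a \<in> A"
    and reflects: "\<And>x y. x \<in> A \<Longrightarrow> y \<in> A \<Longrightarrow> (x, y) \<in> R \<longleftrightarrow> (h x, h y) \<in> S"
  shows "S `` (h ` (R `` {a})) = S `` {h a}"
proof
  show "S `` (h ` (R `` {a})) \<subseteq> S `` {h a}"
  proof
    fix z assume "z \<in> S `` (h ` (R `` {a}))"
    then obtain x where x: "(a, x) \<in> R" "(h x, z) \<in> S" by blast
    then have "(h a, h x) \<in> S" using reflects[OF \<open>a \<in> A\<close>] equiv_type[OF R] by blast
    then show "z \<in> S `` {h a}" using x(2) S by (blast elim: equivE dest: transD)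
  qed
  show "S `` {h a} \<subseteq> S `` (h ` (R `` {a}))"
    using equiv_class_self[OF R \<open>a \<in> A\<close>] by blast
qed

lemma bij_betw_quotients:
  assumes R: "equiv A R" and S: "equiv B S" and h: "h ` A \<subseteq> B"
    and reflects: "\<And>x y. x \<in> A \<Longrightarrow> y \<in> A \<Longrightarrow> (x, y) \<in> R \<longleftrightarrow> (h x, h y) \<in> S"
    and onto: "\<And>b. b \<in> B \<Longrightarrow> \<exists>a\<in>A. (h a, b) \<in> S"
  shows "bij_betw (\<lambda>X. S `` (h ` X)) (A // R) (B // S)"
proof (rule bij_betw_imageI)
  note class_image = Image_image_equiv_class[OF R S _ reflects]
  show "inj_on (\<lambda>X. S `` (h ` X)) (A // R)"
  proof (rule inj_onI)
    fix X Y assume "X \<in> A // R" "Y \<in> A // R" and eq: "S `` (h ` X) = S `` (h ` Y)"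
    then obtain a b where ab: "X = R `` {a}" "a \<in> A" "Y = R `` {b}" "b \<in> A"
      by (auto elim!: quotientE)
    then have "S `` {h a} = S `` {h b}" "h a \<in> B" "h b \<in> B" using eq class_image h by auto
    then have "(h a, h b) \<in> S" using eq_equiv_class_iff[OF S] by blast
    then show "X = Y" using reflects ab equiv_class_eq[OF R] by blast
  qed
  show "(\<lambda>X. S `` (h ` X)) ` (A // R) = B // S"
  proof
    show "(\<lambda>X. S `` (h ` X)) ` (A // R) \<subseteq> B // S"
    proof
      fix Z assume "Z \<in> (\<lambda>X. S `` (h ` X)) ` (A // R)"
      then obtain a where "a \<in> A" "Z = S `` (h ` (R `` {a}))" by (auto elim!: quotientE)
      then show "Z \<in> B // S" using class_image h quotientI[of "h a" B S] by auto
    qed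
    show "B // S \<subseteq> (\<lambda>X. S `` (h ` X)) ` (A // R)"
    proof
      fix Z assume "Z \<in> B // S"
      then obtain b where b: "b \<in> B" "Z = S `` {b}" by (rule quotientE)
      then obtain a where a: "a \<in> A" "(h a, b) \<in> S" using onto by blast
      then have "Z = S `` (h ` (R `` {a}))" using b(2) class_image equiv_class_eq[OF S] by simp
      then show "Z \<in> (\<lambda>X. S `` (h ` X)) ` (A // R)" using a(1) by (blast intro: quotientI)
    qed
  qed
qed

theorem theorem5p10:
  fixes dummy :: "'k::field"
  assumes char: "(2::'k) \<noteq> 0"
  shows "(\<forall>v \<in> (oct_Vss :: 'k oct set). \<forall>w \<in> oct_Vss.
            (v, w) \<in> oct_orbit_rel \<longleftrightarrow> sq_class_eq (oct_norm v) (oct_norm w))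
       \<and> (\<forall>t::'k. t \<noteq> 0 \<longrightarrow> (\<exists>v \<in> oct_Vss. sq_class_eq (oct_norm v) t))
       \<and> (\<exists>f. bij_betw f ((oct_Vss :: 'k oct set) // oct_orbit_rel)
                         ((comp_alg2 :: ((_ \<Rightarrow> _ \<Rightarrow> 'k \<times> 'k) \<times> _) set) // comp_alg2_iso))"
proof (intro conjI)
  show "\<forall>v \<in> (oct_Vss :: 'k oct set). \<forall>w \<in> oct_Vss.
      (v, w) \<in> oct_orbit_rel \<longleftrightarrow> sq_class_eq (oct_norm v) (oct_norm w)"
    using oct_orbit_rel_iff[OF char] by blast
  show "\<forall>t::'k. t \<noteq> 0 \<longrightarrow> (\<exists>v \<in> oct_Vss. sq_class_eq (oct_norm v) t)"
    using oct_std_Vss sq_class_eq_refl by metis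
  define h where "h v = (quad_mult (oct_norm v), quad_norm (oct_norm v))" for v :: "'k oct"
  have "bij_betw (\<lambda>X. comp_alg2_iso `` (h ` X)) (oct_Vss // oct_orbit_rel) (comp_alg2 // comp_alg2_iso)"
  proof (rule bij_betw_quotients[OF oct_orbit_rel_equiv[OF char] comp_alg2_iso_equiv])
    show "h ` oct_Vss \<subseteq> comp_alg2"
      using quad_comp_alg2[OF char] by (auto simp: h_def oct_Vss_def)
    show "(v, w) \<in> oct_orbit_rel \<longleftrightarrow> (h v, h w) \<in> comp_alg2_iso"
      if "v \<in> oct_Vss" "w \<in> oct_Vss" for v w
      using oct_orbit_rel_iff[OF char that] quad_iso_iff_sq_class_eq[OF char] that
      by (simp add: h_def oct_Vss_def)
    show "\<exists>v\<in>oct_Vss. (h v, A) \<in> comp_alg2_iso" if A: "A \<in> comp_alg2" for A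
    proof -
      obtain t where "t \<noteq> 0" "((quad_mult t, quad_norm t), A) \<in> comp_alg2_iso"
        using comp_alg2_iso_quad[of "fst A" "snd A"] A char by auto
      then show ?thesis using oct_std_Vss[of t] by (metis h_def)
    qed
  qed
  then show "\<exists>f. bij_betw f ((oct_Vss :: 'k oct set) // oct_orbit_rel)
      ((comp_alg2 :: ((_ \<Rightarrow> _ \<Rightarrow> 'k \<times> 'k) \<times> _) set) // comp_alg2_iso)"
    by blast
qed

end
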